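(* For every $\theta\in[0,\pi)$, the set of minimisers of $\overline Q^{\,\theta}_T$ on $\mathbb{R}^2$ is exactly the segment $[\alpha^T_{\theta,1},\alpha^T_{\theta,2}]\times\{\beta_\theta\}$, where $$\beta_\theta:=\frac{kc_1}{2c}\sin2\theta,\qquad \alpha^T_{\theta,1}:=-\frac{kc_1}{2c}(1+\cos2\theta),\qquad \alpha^T_{\theta,2}:=\frac{kc_1}{2c}(1-\cos2\theta).$$ Moreover $\min_{\mathbb{R}^2}\overline Q^{\,\theta}_T=c_1k^2\big(2-\tfrac{c_1}{c}\big)+\bar e_T$.
   Context: Fix constants $c_1>0$, $c_2>0$, $c:=c_1+c_2$, $k>0$, $\bar e_T\ge0$, $\theta\in[0,\pi)$. Let $a_\theta=\cos2\theta$, $b_\theta=\sin2\theta$ and $\bar A^\theta_T:=k\begin{pmatrix}-a_\theta&b_\theta\\ b_\theta&a_\theta\end{pmatrix}$. For matrices $M\cdot N={\rm tr}(M^{\rm T}N)$, $|M|^2=M\cdot M$. For $M\in\mathbb{R}^{2\times2}_{\rm sym}$, $L^\theta_T(M):=-2c_1M\cdot\bar A^\theta_T+2c_1k^2+\bar e_T$. For $(\alpha,\beta)\in\mathbb{R}^2$, $$\overline Q^{\,\theta}_T(\alpha,\beta):=\min_{\gamma\in\mathbb{R}}\Big\{c|M|^2+2c|\det M|+L^\theta_T(M): M=\begin{pmatrix}\alpha&\beta\\ \beta&\gamma\end{pmatrix}\Big\}.$$ *)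

theory Defs
  imports "HOL-Analysis.Analysis"
begin

definition frob :: "real^2^2 \<Rightarrow> real^2^2 \<Rightarrow> real" where
  "frob M N = (\<Sum>i\<in>UNIV. \<Sum>j\<in>UNIV. M $ i $ j * N $ i $ j)"

definition frob_sq :: "real^2^2 \<Rightarrow> real" where
  "frob_sq M = frob M M"

definition symmat :: "real \<Rightarrow> real \<Rightarrow> real \<Rightarrow> real^2^2" where
  "symmat a b g = vector [vector [a, b], vector [b, g]]"

definition Abar :: "real \<Rightarrow> real \<Rightarrow> real^2^2" where
  "Abar k \<theta> = (\<chi> i j. k * (vector [vector [- cos (2*\<theta>), sin (2*\<theta>)],
                                     vector [sin (2*\<theta>), cos (2*\<theta>)]] :: real^2^2) $ i $ j)"

definition LT :: "real \<Rightarrow> real \<Rightarrow> real \<Rightarrow> real \<Rightarrow> real^2^2 \<Rightarrow> real" where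
  "LT c1 k eT \<theta> M = - 2 * c1 * frob M (Abar k \<theta>) + 2 * c1 * k^2 + eT"

text \<open>Qbar: the minimum over gamma (written as an infimum) with c = c1 + c2.\<close>
definition Qbar :: "real \<Rightarrow> real \<Rightarrow> real \<Rightarrow> real \<Rightarrow> real \<Rightarrow> real \<Rightarrow> real \<Rightarrow> real" where
  "Qbar c1 c2 k eT \<theta> \<alpha> \<beta> =
     (INF \<gamma>. (c1 + c2) * frob_sq (symmat \<alpha> \<beta> \<gamma>) + 2 * (c1 + c2) * \<bar>det (symmat \<alpha> \<beta> \<gamma>)\<bar>
             + LT c1 k eT \<theta> (symmat \<alpha> \<beta> \<gamma>))"

end

theory Submission
  imports Defs
begin

text \<open>Since \<open>|M|\<^sup>2 + 2|det M| = (\<gamma> - \<alpha>)\<^sup>2 + 4\<beta>\<^sup>2 + 4 max 0 (det M)\<close> for \<open>M = symmat \<alpha> \<beta> \<gamma>\<close>,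
  completing the square (with \<open>C = cos 2\<theta>\<close>, \<open>S = sin 2\<theta>\<close>, \<open>h = k c\<^sub>1 / (2c)\<close>) writes the integrand
  of \<open>Qbar\<close> as \<open>c\<close> times the nonnegative \<open>defect\<close> below plus the constant \<open>c\<^sub>1k\<^sup>2(2 - c\<^sub>1/c) + e\<^sub>T\<close>.
  The defect vanishes for some \<open>\<gamma>\<close> exactly when \<open>\<beta> = hS\<close> and \<open>\<gamma> = \<alpha> + 2hC\<close> gives \<open>det M \<le> 0\<close>,
  i.e. \<open>(\<alpha> + h(1 + C))(\<alpha> - h(1 - C)) \<le> 0\<close>; otherwise it is bounded away from zero uniformly in
  \<open>\<gamma>\<close>, so the infimum over \<open>\<gamma>\<close> stays strictly above the constant.\<close>

lemma frob_sq_symmat: "frob_sq (symmat a b g) = a\<^sup>2 + 2 * b\<^sup>2 + g\<^sup>2"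
  by (simp add: frob_sq_def frob_def symmat_def sum_2 power2_eq_square)

lemma det_symmat: "det (symmat a b g) = a * g - b\<^sup>2"
  by (simp add: det_2 symmat_def power2_eq_square)

lemma frob_symmat_Abar:
  "frob (symmat a b g) (Abar k \<theta>) = k * ((g - a) * cos (2 * \<theta>) + 2 * b * sin (2 * \<theta>))"
  by (simp add: frob_def symmat_def Abar_def sum_2 algebra_simps)

definition defect :: "real \<Rightarrow> real \<Rightarrow> real \<Rightarrow> real \<Rightarrow> real \<Rightarrow> real \<Rightarrow> real" where
  "defect C S h a b g = (g - a - 2 * h * C)\<^sup>2 + 4 * (b - h * S)\<^sup>2 + 4 * max 0 (a * g - b\<^sup>2)"

lemma defect_nonneg: "0 \<le> defect C S h a b g"
  by (simp add: defect_def)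

lemma integrand_eq_defect:
  fixes c1 c2 k eT \<theta> a b g :: real
  assumes "0 < c1 + c2"
  shows "(c1 + c2) * frob_sq (symmat a b g) + 2 * (c1 + c2) * \<bar>det (symmat a b g)\<bar>
           + LT c1 k eT \<theta> (symmat a b g)
         = (c1 + c2) * defect (cos (2 * \<theta>)) (sin (2 * \<theta>)) (k * c1 / (2 * (c1 + c2))) a b g
           + (c1 * k\<^sup>2 * (2 - c1 / (c1 + c2)) + eT)"
proof -
  define c C S h where "c = c1 + c2" and "C = cos (2 * \<theta>)" and "S = sin (2 * \<theta>)"
    and "h = k * c1 / (2 * c)"
  have "0 < c"
    using assms by (simp add: c_def)
  then have kc1: "k * c1 = 2 * c * h"
    by (simp add: h_def)
  have const: "c1 * k\<^sup>2 * (2 - c1 / c) = 2 * c1 * k\<^sup>2 - 4 * c * h\<^sup>2"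
  proof -
    have "c1 * k\<^sup>2 * (2 - c1 / c) = 2 * c1 * k\<^sup>2 - (k * c1)\<^sup>2 / c"
      by (simp add: field_simps power2_eq_square)
    also have "\<dots> = 2 * c1 * k\<^sup>2 - 4 * c * h\<^sup>2"
      using \<open>0 < c\<close> unfolding kc1 by (simp add: power2_eq_square)
    finally show ?thesis .
  qed
  have abs_pos_part: "\<bar>x\<bar> = 2 * max 0 x - x" for x :: real
    by simp
  have "C\<^sup>2 + S\<^sup>2 = 1"
    by (simp add: C_def S_def)
  then have "c * (a\<^sup>2 + 2 * b\<^sup>2 + g\<^sup>2) + 2 * c * \<bar>a * g - b\<^sup>2\<bar> - 2 * (k * c1) * ((g - a) * C + 2 * b * S)
      = c * defect C S h a b g - 4 * c * h\<^sup>2"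
    unfolding kc1 defect_def abs_pos_part by algebra
  then show ?thesis
    unfolding LT_def frob_sq_symmat det_symmat frob_symmat_Abar const[unfolded c_def]
    by (simp add: c_def C_def S_def h_def algebra_simps)
qed

lemma sq_add_pos_part_bounded_below:
  fixes a d :: real
  assumes "0 < d"
  shows "\<exists>e>0. \<forall>t. e \<le> t\<^sup>2 + max 0 (d + a * t)"
proof -
  define r where "r = d / (2 * \<bar>a\<bar> + 1)"
  have "0 < r"
    using assms by (simp add: r_def add_nonneg_pos)
  have "min (d / 2) (r\<^sup>2) \<le> t\<^sup>2 + max 0 (d + a * t)" for t
  proof (cases "\<bar>a * t\<bar> \<le> d / 2")
    case True
    then have "d / 2 \<le> max 0 (d + a * t)"
      by (simp add: abs_le_iff)
    moreover have "0 \<le> t\<^sup>2"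
      by simp
    ultimately show ?thesis
      by linarith
  next
    case False
    then have "d < (2 * \<bar>a\<bar> + 1) * \<bar>t\<bar>"
      by (simp add: abs_mult algebra_simps)
    then have "r < \<bar>t\<bar>"
      by (simp add: r_def divide_less_eq mult.commute add_nonneg_pos)
    then have "r\<^sup>2 \<le> t\<^sup>2"
      using \<open>0 < r\<close> by (metis abs_of_pos less_imp_le power2_abs power_mono)
    then show ?thesis
      by simp
  qed
  moreover have "0 < min (d / 2) (r\<^sup>2)"
    using assms \<open>0 < r\<close> by simp
  ultimately show ?thesis
    by blast
qed

lemma defect_at_optimal_gamma:
  assumes "b = h * S" and "a * (a + 2 * h * C) \<le> b\<^sup>2"
  shows "defect C S h a b (a + 2 * h * C) = 0"
  using assms by (simp add: defect_def)

lemma defect_bounded_below: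
  assumes "\<not> (b = h * S \<and> a * (a + 2 * h * C) \<le> b\<^sup>2)"
  shows "\<exists>e>0. \<forall>g. e \<le> defect C S h a b g"
proof (cases "b = h * S")
  case False
  then have "\<forall>g. 4 * (b - h * S)\<^sup>2 \<le> defect C S h a b g"
    by (simp add: defect_def)
  with False show ?thesis
    by (intro exI[of _ "4 * (b - h * S)\<^sup>2"]) simp
next
  case True
  define g0 where "g0 = a + 2 * h * C"
  define d where "d = a * g0 - b\<^sup>2"
  have "0 < d"
    using assms True by (simp add: d_def g0_def)
  then obtain e where "0 < e" and e: "\<And>t. e \<le> t\<^sup>2 + max 0 (d + a * t)"
    using sq_add_pos_part_bounded_below by blast
  have "e \<le> defect C S h a b g" for g
  proof -
    have "a * g - b\<^sup>2 = d + a * (g - g0)"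
      by (simp add: d_def algebra_simps)
    then have "defect C S h a b g = (g - g0)\<^sup>2 + 4 * (b - h * S)\<^sup>2 + 4 * max 0 (d + a * (g - g0))"
      by (simp add: defect_def g0_def diff_diff_eq)
    moreover have "0 \<le> max 0 (d + a * (g - g0))" and "0 \<le> 4 * (b - h * S)\<^sup>2"
      by simp_all
    ultimately show ?thesis
      using e[of "g - g0"] by (smt (verit))
  qed
  with \<open>0 < e\<close> show ?thesis
    by blast
qed

lemma pos_part_condition_iff_interval:
  fixes a h C S :: real
  assumes "C\<^sup>2 + S\<^sup>2 = 1" and "0 \<le> h"
  shows "a * (a + 2 * h * C) \<le> (h * S)\<^sup>2 \<longleftrightarrow> a \<in> {- h * (1 + C) .. h * (1 - C)}"
proof -
  have "a * (a + 2 * h * C) - (h * S)\<^sup>2 = (a + h * (1 + C)) * (a - h * (1 - C))"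
    using assms(1) by (simp add: algebra_simps power2_eq_square) algebra
  then have "a * (a + 2 * h * C) \<le> (h * S)\<^sup>2 \<longleftrightarrow> (a + h * (1 + C)) * (a - h * (1 - C)) \<le> 0"
    by linarith
  moreover have "- h * (1 + C) \<le> h * (1 - C)"
    using assms(2) by (simp add: algebra_simps)
  ultimately show ?thesis
    by (auto simp: mult_le_0_iff)
qed

lemma Qbar_eq_INF_defect:
  assumes "0 < c1 + c2"
  shows "Qbar c1 c2 k eT \<theta> a b
    = (INF g. (c1 + c2) * defect (cos (2 * \<theta>)) (sin (2 * \<theta>)) (k * c1 / (2 * (c1 + c2))) a b g
              + (c1 * k\<^sup>2 * (2 - c1 / (c1 + c2)) + eT))"
  unfolding Qbar_def integrand_eq_defect[OF assms] ..

lemma Qbar_ge: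
  assumes "0 < c1 + c2"
  shows "c1 * k\<^sup>2 * (2 - c1 / (c1 + c2)) + eT \<le> Qbar c1 c2 k eT \<theta> a b"
  unfolding Qbar_eq_INF_defect[OF assms]
  using assms by (intro cINF_greatest) (simp_all add: defect_nonneg)

lemma Qbar_eq_min_iff:
  fixes c1 c2 k eT \<theta> a b :: real
  assumes "0 < c1 + c2" and "0 \<le> k * c1"
  defines "h \<equiv> k * c1 / (2 * (c1 + c2))"
  shows "Qbar c1 c2 k eT \<theta> a b = c1 * k\<^sup>2 * (2 - c1 / (c1 + c2)) + eT
    \<longleftrightarrow> a \<in> {- h * (1 + cos (2 * \<theta>)) .. h * (1 - cos (2 * \<theta>))} \<and> b = h * sin (2 * \<theta>)"
proof -
  define C S m where "C = cos (2 * \<theta>)" and "S = sin (2 * \<theta>)"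
    and "m = c1 * k\<^sup>2 * (2 - c1 / (c1 + c2)) + eT"
  have Q: "Qbar c1 c2 k eT \<theta> a b = (INF g. (c1 + c2) * defect C S h a b g + m)"
    unfolding Qbar_eq_INF_defect[OF assms(1)] C_def S_def h_def m_def ..
  have "0 \<le> h"
    using assms by (simp add: h_def)
  have "Qbar c1 c2 k eT \<theta> a b = m \<longleftrightarrow> b = h * S \<and> a * (a + 2 * h * C) \<le> b\<^sup>2"
  proof
    assume "b = h * S \<and> a * (a + 2 * h * C) \<le> b\<^sup>2"
    then have "defect C S h a b (a + 2 * h * C) = 0"
      using defect_at_optimal_gamma by blast
    then show "Qbar c1 c2 k eT \<theta> a b = m"
      unfolding Q using assms(1) by (intro cInf_eq_minimum) (auto simp: defect_nonneg)
  next
    assume min: "Qbar c1 c2 k eT \<theta> a b = m"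
    show "b = h * S \<and> a * (a + 2 * h * C) \<le> b\<^sup>2"
    proof (rule ccontr)
      assume "\<not> (b = h * S \<and> a * (a + 2 * h * C) \<le> b\<^sup>2)"
      then obtain e where "0 < e" and "\<forall>g. e \<le> defect C S h a b g"
        using defect_bounded_below by blast
      then have "(c1 + c2) * e + m \<le> Qbar c1 c2 k eT \<theta> a b"
        unfolding Q using assms(1) by (intro cINF_greatest) simp_all
      with min \<open>0 < e\<close> assms(1) show False
        by (smt (verit) mult_pos_pos)
    qed
  qed
  also have "\<dots> \<longleftrightarrow> a \<in> {- h * (1 + C) .. h * (1 - C)} \<and> b = h * S"
    using pos_part_condition_iff_interval[of C S h a] \<open>0 \<le> h\<close> by (auto simp: C_def S_def)
  finally show ?thesis
    unfolding m_def C_def S_def .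
qed

theorem lemma3p3:
  fixes c1 c2 k eT \<theta> :: real
  assumes "c1 > 0" and "c2 > 0" and "k > 0" and "eT \<ge> 0"
    and "0 \<le> \<theta>" and "\<theta> < pi"
  defines "c \<equiv> c1 + c2"
  shows "{(\<alpha>, \<beta>). \<forall>\<alpha>' \<beta>'. Qbar c1 c2 k eT \<theta> \<alpha> \<beta> \<le> Qbar c1 c2 k eT \<theta> \<alpha>' \<beta>'}
           = {- (k * c1 / (2 * c)) * (1 + cos (2 * \<theta>)) .. (k * c1 / (2 * c)) * (1 - cos (2 * \<theta>))}
             \<times> {(k * c1 / (2 * c)) * sin (2 * \<theta>)}
       \<and> (INF p. Qbar c1 c2 k eT \<theta> (fst p) (snd p)) = c1 * k^2 * (2 - c1 / c) + eT"
proof -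
  define Q h m where "Q = Qbar c1 c2 k eT \<theta>" and "h = k * c1 / (2 * c)"
    and "m = c1 * k\<^sup>2 * (2 - c1 / c) + eT"
  define segment where
    "segment = {- h * (1 + cos (2 * \<theta>)) .. h * (1 - cos (2 * \<theta>))} \<times> {h * sin (2 * \<theta>)}"
  have "0 < c1 + c2" and "0 \<le> k * c1"
    using assms by simp_all
  then have Q_ge: "m \<le> Q a b" and Q_eq_iff: "Q a b = m \<longleftrightarrow> (a, b) \<in> segment" for a b
    using Qbar_ge Qbar_eq_min_iff
    by (simp_all add: Q_def h_def m_def segment_def c_def)
  have "0 \<le> h"
    using \<open>0 \<le> k * c1\<close> \<open>0 < c1 + c2\<close> by (simp add: h_def c_def)
  then have "(- h * (1 + cos (2 * \<theta>)), h * sin (2 * \<theta>)) \<in> segment"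
    by (simp add: segment_def algebra_simps)
  then obtain p0 where "Q (fst p0) (snd p0) = m"
    using Q_eq_iff by fastforce
  then have "{(\<alpha>, \<beta>). \<forall>\<alpha>' \<beta>'. Q \<alpha> \<beta> \<le> Q \<alpha>' \<beta>'} = segment"
    using Q_ge Q_eq_iff by (force intro: order.antisym)
  moreover have "(INF p. Q (fst p) (snd p)) = m"
    using \<open>Q (fst p0) (snd p0) = m\<close> Q_ge by (intro cInf_eq_minimum) auto
  ultimately show ?thesis
    by (simp add: Q_def h_def m_def segment_def)
qed

end
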